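(* Let $(X,T)$ have data distribution $P$, with $T\in\{0,1\}$, and let $\delta\in(0,1/2)$. Suppose $\delta<P(T=t\mid X=x)<1-\delta$ for all $t\in\{0,1\}$ and all $x$. Let $Q(T\mid X)$ be a model that is calibrated relative to $P$, i.e. $P\big(T=1\mid Q(T=1\mid X)=q\big)=q$ for every value $q$ taken by $Q(T=1\mid X)$. Then $\delta<Q(T=t\mid X=x)<1-\delta$ for all $t\in\{0,1\}$ and all $x$.
   Context: $Q(T\mid X)$ is a propensity score model, a conditional distribution over the binary treatment $T$ given features $X$, with $Q(T=0\mid X)=1-Q(T=1\mid X)$. *)

theory Defs
  imports "HOL-Probability.Probability"
begin

text \<open>Conditional probability of the event T = 1 given the random variable Y
  (with values in the measurable space N), as a function on the sample space,
  i.e. a version of P(T = 1 | sigma(Y)).\<close>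
definition cond_prob_T1 ::
  "'a measure \<Rightarrow> ('a \<Rightarrow> bool) \<Rightarrow> ('a \<Rightarrow> 'b) \<Rightarrow> 'b measure \<Rightarrow> 'a \<Rightarrow> real" where
  "cond_prob_T1 M T Y N =
     real_cond_exp M (vimage_algebra (space M) Y N) (indicator {\<omega> \<in> space M. T \<omega>})"

definition binprob :: "('x \<Rightarrow> real) \<Rightarrow> 'x \<Rightarrow> bool \<Rightarrow> real" where
  "binprob q x t = (if t then q x else 1 - q x)"

end

theory Submission
  imports Defs
begin

text \<open>Write \<open>A\<close> for the event that the model output \<open>Q(X)\<close> is at most \<open>\<delta>\<close>.
  Calibration says that \<open>Q(X)\<close> is a version of \<open>P(T = 1 | Q(X))\<close>, and \<open>e(X)\<close> is a version
  of \<open>P(T = 1 | X)\<close>. Since \<open>A\<close> lies in the sigma-algebra generated by \<open>Q(X)\<close>, which is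
  contained in the one generated by \<open>X\<close>, both integrate to \<open>P(A \<inter> {T = 1})\<close> over \<open>A\<close>.
  But on \<open>A\<close> we have \<open>Q(X) \<le> \<delta> < e(X)\<close>, so \<open>A\<close> must be a null set. The event
  \<open>Q(X) \<ge> 1 - \<delta>\<close> is treated symmetrically.\<close>

lemma binprob_bounds_iff:
  "(\<forall>t. \<delta> < binprob q x t \<and> binprob q x t < 1 - \<delta>) \<longleftrightarrow> \<delta> < q x \<and> q x < 1 - \<delta>"
  by (auto simp: binprob_def all_bool_eq)

lemma cond_prob_T1_version:
  assumes M: "finite_measure M" and Y: "Y \<in> measurable M K"
    and T: "T \<in> measurable M (count_space UNIV)"
    and f: "f \<in> borel_measurable M" and version: "AE \<omega> in M. cond_prob_T1 M T Y K \<omega> = f \<omega>"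
  shows "integrable M f"
    and "B \<in> sets K \<Longrightarrow>
      (\<integral>\<omega> \<in> Y -` B \<inter> space M. f \<omega> \<partial>M) = measure M {\<omega> \<in> space M. T \<omega> \<and> Y \<omega> \<in> B}"
proof -
  interpret finite_measure M
    by (rule M)
  interpret finite_measure_subalgebra M "vimage_algebra (space M) Y K"
    by unfold_locales
      (use Y in \<open>auto simp: subalgebra_def sets_vimage_algebra2 measurable_space measurable_sets\<close>)
  let ?T = "{\<omega> \<in> space M. T \<omega>}"
  have "?T \<in> sets M"
    using measurable_sets[OF T, of "{True}"] by (simp add: vimage_def Int_def conj_commute)
  then have int_T: "integrable M (indicator ?T :: 'a \<Rightarrow> real)"
    by (simp add: emeasure_eq_measure)
  have int_cond: "integrable M (cond_prob_T1 M T Y K)"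
    unfolding cond_prob_T1_def using int_T by (rule real_cond_exp_int(1))
  then show "integrable M f"
    using f version by (rule integrable_cong_AE_imp)
  assume B: "B \<in> sets K"
  let ?A = "Y -` B \<inter> space M"
  have A: "?A \<in> sets M"
    using Y B by (rule measurable_sets)
  have "(\<integral>\<omega> \<in> ?A. f \<omega> \<partial>M) = (\<integral>\<omega> \<in> ?A. cond_prob_T1 M T Y K \<omega> \<partial>M)"
    using A f int_cond version by (intro set_lebesgue_integral_cong_AE) auto
  also have "\<dots> = (\<integral>\<omega> \<in> ?A. indicator ?T \<omega> \<partial>M)"
    unfolding cond_prob_T1_def using int_T in_vimage_algebra[OF B] by (rule real_cond_exp_intA[symmetric])
  also have "\<dots> = measure M (?A \<inter> ?T \<inter> space M)"
    unfolding set_lebesgue_integral_def by (simp add: indicator_inter_arith[symmetric])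
  also have "?A \<inter> ?T \<inter> space M = {\<omega> \<in> space M. T \<omega> \<and> Y \<omega> \<in> B}"
    by auto
  finally show "(\<integral>\<omega> \<in> ?A. f \<omega> \<partial>M) = measure M {\<omega> \<in> space M. T \<omega> \<and> Y \<omega> \<in> B}" .
qed

lemma (in finite_measure) AE_notin_if_set_integral_eq_less:
  fixes f g :: "'a \<Rightarrow> real"
  assumes f: "integrable M f" and g: "integrable M g" and A: "A \<in> sets M"
    and eq: "(\<integral>\<omega> \<in> A. f \<omega> \<partial>M) = (\<integral>\<omega> \<in> A. g \<omega> \<partial>M)"
    and less: "\<And>\<omega>. \<omega> \<in> A \<Longrightarrow> f \<omega> < g \<omega>"
  shows "AE \<omega> in M. \<omega> \<notin> A"
proof (rule AE_not_in, rule ccontr)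
  assume "A \<notin> null_sets M"
  then have "emeasure M A \<noteq> 0"
    using A by (auto simp: null_sets_def)
  then have "(\<integral>\<omega>. indicator A \<omega> *\<^sub>R f \<omega> \<partial>M) < (\<integral>\<omega>. indicator A \<omega> *\<^sub>R g \<omega> \<partial>M)"
    using A less
    by (intro integral_less_AE[where A = A] integrable_mult_indicator f g AE_I2)
       (auto simp: indicator_def less_imp_le dest: less_imp_neq)
  with eq show False
    unfolding set_lebesgue_integral_def by simp
qed

locale calibrated_propensity_model = prob_space M
  for M :: "'a measure" +
  fixes N :: "'x measure" and X :: "'a \<Rightarrow> 'x" and T :: "'a \<Rightarrow> bool"
    and e :: "'x \<Rightarrow> real" and Q :: "'x \<Rightarrow> real"
  assumes X: "X \<in> measurable M N"
    and T: "T \<in> measurable M (count_space UNIV)"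
    and e_meas: "e \<in> borel_measurable N"
    and e_version: "AE \<omega> in M. cond_prob_T1 M T X N \<omega> = e (X \<omega>)"
    and Q_meas: "Q \<in> borel_measurable N"
    and calibrated: "AE \<omega> in M. cond_prob_T1 M T (\<lambda>\<omega>. Q (X \<omega>)) borel \<omega> = Q (X \<omega>)"
begin

lemma measurable_model: "(\<lambda>\<omega>. Q (X \<omega>)) \<in> borel_measurable M"
  using Q_meas X by measurable

lemma measurable_propensity: "(\<lambda>\<omega>. e (X \<omega>)) \<in> borel_measurable M"
  using e_meas X by measurable

lemmas propensity_version =
  cond_prob_T1_version[OF finite_measure_axioms X T measurable_propensity e_version]

lemmas model_version =
  cond_prob_T1_version[OF finite_measure_axioms measurable_model T measurable_model calibrated]

lemma set_integral_model_eq_propensity: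
  assumes B: "B \<in> sets borel"
  shows "(\<integral>\<omega> \<in> {\<omega> \<in> space M. Q (X \<omega>) \<in> B}. Q (X \<omega>) \<partial>M)
       = (\<integral>\<omega> \<in> {\<omega> \<in> space M. Q (X \<omega>) \<in> B}. e (X \<omega>) \<partial>M)"
proof -
  let ?A = "{\<omega> \<in> space M. Q (X \<omega>) \<in> B}"
  have B_N: "Q -` B \<inter> space N \<in> sets N"
    using Q_meas B by (rule measurable_sets)
  have "(\<integral>\<omega> \<in> ?A. Q (X \<omega>) \<partial>M) = prob {\<omega> \<in> space M. T \<omega> \<and> Q (X \<omega>) \<in> B}"
    using model_version(2)[OF B] by (simp add: vimage_def Int_def conj_commute)
  also have "\<dots> = prob {\<omega> \<in> space M. T \<omega> \<and> X \<omega> \<in> Q -` B \<inter> space N}"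
    using measurable_space[OF X] by (intro arg_cong[where f = prob]) auto
  also have "\<dots> = (\<integral>\<omega> \<in> X -` (Q -` B \<inter> space N) \<inter> space M. e (X \<omega>) \<partial>M)"
    using propensity_version(2)[OF B_N] by simp
  also have "X -` (Q -` B \<inter> space N) \<inter> space M = ?A"
    using measurable_space[OF X] by auto
  finally show ?thesis .
qed

lemma AE_model_gt:
  assumes "\<forall>x \<in> space N. c < e x"
  shows "AE \<omega> in M. c < Q (X \<omega>)"
proof -
  have "AE \<omega> in M. \<omega> \<notin> {\<omega> \<in> space M. Q (X \<omega>) \<in> {..c}}"
  proof (rule AE_notin_if_set_integral_eq_less[OF model_version(1) propensity_version(1)])
    show "{\<omega> \<in> space M. Q (X \<omega>) \<in> {..c}} \<in> sets M"
      using measurable_model by measurable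
    show "(\<integral>\<omega> \<in> {\<omega> \<in> space M. Q (X \<omega>) \<in> {..c}}. Q (X \<omega>) \<partial>M)
        = (\<integral>\<omega> \<in> {\<omega> \<in> space M. Q (X \<omega>) \<in> {..c}}. e (X \<omega>) \<partial>M)"
      by (rule set_integral_model_eq_propensity) simp
  qed (use assms measurable_space[OF X] in fastforce)
  then show ?thesis
    using AE_space by eventually_elim auto
qed

lemma AE_model_less:
  assumes "\<forall>x \<in> space N. e x < c"
  shows "AE \<omega> in M. Q (X \<omega>) < c"
proof -
  have "AE \<omega> in M. \<omega> \<notin> {\<omega> \<in> space M. Q (X \<omega>) \<in> {c..}}"
  proof (rule AE_notin_if_set_integral_eq_less[OF propensity_version(1) model_version(1)])
    show "{\<omega> \<in> space M. Q (X \<omega>) \<in> {c..}} \<in> sets M"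
      using measurable_model by measurable
    show "(\<integral>\<omega> \<in> {\<omega> \<in> space M. Q (X \<omega>) \<in> {c..}}. e (X \<omega>) \<partial>M)
        = (\<integral>\<omega> \<in> {\<omega> \<in> space M. Q (X \<omega>) \<in> {c..}}. Q (X \<omega>) \<partial>M)"
      by (rule set_integral_model_eq_propensity[symmetric]) simp
  qed (use assms measurable_space[OF X] in fastforce)
  then show ?thesis
    using AE_space by eventually_elim auto
qed

end

theorem mainTheorem3:
  fixes M :: "'a measure" and N :: "'x measure"
    and X :: "'a \<Rightarrow> 'x" and T :: "'a \<Rightarrow> bool"
    and e :: "'x \<Rightarrow> real"  \<comment> \<open>true propensity x \<mapsto> P(T=1 | X=x)\<close>
    and Q :: "'x \<Rightarrow> real"  \<comment> \<open>model x \<mapsto> Q(T=1 | X=x)\<close>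
    and \<delta> :: real
  assumes M: "prob_space M"
    and X: "X \<in> measurable M N"
    and T: "T \<in> measurable M (count_space UNIV)"
    and e_meas: "e \<in> borel_measurable N"
    and e_version: "AE \<omega> in M. cond_prob_T1 M T X N \<omega> = e (X \<omega>)"
    and Q_meas: "Q \<in> borel_measurable N"
    and Q_prob: "\<forall>x \<in> space N. 0 \<le> Q x \<and> Q x \<le> 1"
    and delta: "0 < \<delta>" "\<delta> < 1/2"
    and overlap: "\<forall>x \<in> space N. \<forall>t. \<delta> < binprob e x t \<and> binprob e x t < 1 - \<delta>"
    and calibrated: "AE \<omega> in M. cond_prob_T1 M T (\<lambda>\<omega>. Q (X \<omega>)) borel \<omega> = Q (X \<omega>)"
  shows "AE x in distr M N X. \<forall>t. \<delta> < binprob Q x t \<and> binprob Q x t < 1 - \<delta>"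
proof -
  interpret calibrated_propensity_model M N X T e Q
    using M X T e_meas e_version Q_meas calibrated
    by (simp add: calibrated_propensity_model_def calibrated_propensity_model_axioms_def)
  have e_bounds: "\<forall>x \<in> space N. \<delta> < e x" "\<forall>x \<in> space N. e x < 1 - \<delta>"
    using overlap by (simp_all add: binprob_bounds_iff)
  have "{x \<in> space N. \<delta> < Q x \<and> Q x < 1 - \<delta>} \<in> sets N"
    using Q_meas by measurable
  moreover have "AE \<omega> in M. \<delta> < Q (X \<omega>) \<and> Q (X \<omega>) < 1 - \<delta>"
    using AE_model_gt[OF e_bounds(1)] AE_model_less[OF e_bounds(2)] by eventually_elim simp
  ultimately have "AE x in distr M N X. \<delta> < Q x \<and> Q x < 1 - \<delta>"
    by (subst AE_distr_iff[OF X])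
  then show ?thesis
    unfolding binprob_bounds_iff .
qed

end
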